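(* The suboperad of $\mathrm{CNCB}$ generated by $T_{bbb}$ and $T_{bbu}$ is isomorphic to the free (nonsymmetric) operad generated by two generators of arity $2$.
   Context: For $n\ge2$, a bicoloured noncrossing configuration (BNC) of size $n$ is a regular polygon with vertices $1,\dots,n+1$ clockwise, together with disjoint sets of blue and red arcs among the arcs $(i,j)$, $1\le i<j\le n+1$. The arcs $(i,i+1)$ are the edges ($i$th edge), $(1,n+1)$ is the base, and the others are diagonals. Coloured arcs are pairwise noncrossing ($(i,j),(k,l)$ cross iff $i<k<j<l$ or $k<i<l<j$), and red arcs are diagonals. There is one BNC of size $1$, a blue segment, which is the unit. The operad $\mathrm{CNCB}$ has the BNCs as elements (arity = size). Its composition $\mathfrak C\circ_i\mathfrak D$ ($\mathfrak C$ of size $n$, $\mathfrak D$ of size $m$) glues the base of $\mathfrak D$ on the $i$th edge of $\mathfrak C$. Arcs $(a,b)$ of $\mathfrak C$ become $(\sigma(a),\sigma(b))$ with $\sigma(v)=v$ for $v\le i$ and $v+m-1$ otherwise, and arcs $(a,b)$ of $\mathfrak D$ become $(a+i-1,b+i-1)$, keeping colours. The exception is the arc $(i,i+m)$, which is red if the $i$th edge of $\mathfrak C$ and the base of $\mathfrak D$ are both uncoloured, blue if both are blue, and uncoloured otherwise. BNCs of size $2$ are triangles with vertices $1,2,3$ (no diagonals). For $x,y,z\in\{b,u\}$, $T_{xyz}$ denotes the triangle whose first edge $(1,2)$ has colour $x$, whose base $(1,3)$ has colour $y$, and whose second edge $(2,3)$ has colour $z$, where $b$ = blue and $u$ = uncoloured.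 The suboperad generated by a set is the smallest suboperad containing it. *)

theory Defs
  imports Main
begin

text \<open>A bicoloured noncrossing configuration is represented as a triple
  (n, B, R): its size n, its set of blue arcs B and its set of red arcs R.
  Arcs are pairs (i,j) with 1 \<le> i < j \<le> n+1.\<close>

type_synonym bnc = "nat \<times> (nat \<times> nat) set \<times> (nat \<times> nat) set"

definition bnc_size :: "bnc \<Rightarrow> nat" where
  "bnc_size C = fst C"

definition bnc_blue :: "bnc \<Rightarrow> (nat \<times> nat) set" where
  "bnc_blue C = fst (snd C)"

definition bnc_red :: "bnc \<Rightarrow> (nat \<times> nat) set" where
  "bnc_red C = snd (snd C)"

definition is_arc :: "nat \<Rightarrow> nat \<times> nat \<Rightarrow> bool" where
  "is_arc n a \<longleftrightarrow> 1 \<le> fst a \<and> fst a < snd a \<and> snd a \<le> n + 1"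

definition is_diagonal :: "nat \<Rightarrow> nat \<times> nat \<Rightarrow> bool" where
  "is_diagonal n a \<longleftrightarrow> is_arc n a \<and> snd a \<noteq> fst a + 1 \<and> a \<noteq> (1, n + 1)"

definition crosses :: "nat \<times> nat \<Rightarrow> nat \<times> nat \<Rightarrow> bool" where
  "crosses a b \<longleftrightarrow> (case a of (i, j) \<Rightarrow> case b of (k, l) \<Rightarrow>
      (i < k \<and> k < j \<and> j < l) \<or> (k < i \<and> i < l \<and> l < j))"

definition bnc_unit :: bnc where
  "bnc_unit = (1, {(1, 2)}, {})"

definition is_bnc :: "bnc \<Rightarrow> bool" where
  "is_bnc C \<longleftrightarrow>
     (C = bnc_unit) \<or>
     (bnc_size C \<ge> 2 \<and>
      (\<forall>a \<in> bnc_blue C. is_arc (bnc_size C) a) \<and>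
      (\<forall>a \<in> bnc_red C. is_diagonal (bnc_size C) a) \<and>
      bnc_blue C \<inter> bnc_red C = {} \<and>
      (\<forall>a \<in> bnc_blue C \<union> bnc_red C. \<forall>b \<in> bnc_blue C \<union> bnc_red C. \<not> crosses a b))"

text \<open>Partial composition C \<circ>_i D (glue the base of D on the i-th edge of C).\<close>
definition bnc_comp :: "bnc \<Rightarrow> nat \<Rightarrow> bnc \<Rightarrow> bnc" where
  "bnc_comp C i D =
    (let n = bnc_size C; m = bnc_size D;
         \<sigma> = (\<lambda>v::nat. if v \<le> i then v else v + m - 1);
         sa = (\<lambda>(a, b). (\<sigma> a, \<sigma> b));
         sh = (\<lambda>(a::nat, b::nat). (a + i - 1, b + i - 1));
         eB = ((i, i + 1) \<in> bnc_blue C);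
         eR = ((i, i + 1) \<in> bnc_red C);
         bB = ((1, m + 1) \<in> bnc_blue D);
         bR = ((1, m + 1) \<in> bnc_red D);
         e_unc = (\<not> eB \<and> \<not> eR);
         b_unc = (\<not> bB \<and> \<not> bR)
     in (n + m - 1,
         sa ` (bnc_blue C - {(i, i + 1)}) \<union> sh ` (bnc_blue D - {(1, m + 1)})
           \<union> (if eB \<and> bB then {(i, i + m)} else {}),
         sa ` (bnc_red C - {(i, i + 1)}) \<union> sh ` (bnc_red D - {(1, m + 1)})
           \<union> (if e_unc \<and> b_unc then {(i, i + m)} else {})))"

text \<open>Triangles T_xyz: first edge (1,2) colour x, base (1,3) colour y,
  second edge (2,3) colour z.\<close>
definition T_bbb :: bnc where
  "T_bbb = (2, {(1, 2), (1, 3), (2, 3)}, {})"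

definition T_bbu :: bnc where
  "T_bbu = (2, {(1, 2), (1, 3)}, {})"

inductive_set gen_subop :: "bnc set \<Rightarrow> bnc set" for G where
  gen_unit: "bnc_unit \<in> gen_subop G"
| gen_gen: "g \<in> G \<Longrightarrow> g \<in> gen_subop G"
| gen_comp: "\<lbrakk>C \<in> gen_subop G; D \<in> gen_subop G; 1 \<le> i; i \<le> bnc_size C\<rbrakk>
              \<Longrightarrow> bnc_comp C i D \<in> gen_subop G"

text \<open>The free nonsymmetric operad on two generators of arity 2: planar binary
  trees whose internal nodes are labelled by one of the two generators
  (encoded by a boolean); the leaf is the unit; composition grafts at a leaf.\<close>
datatype free2 = Leaf | Node bool free2 free2

fun leaves :: "free2 \<Rightarrow> nat" where
  "leaves Leaf = 1"
| "leaves (Node g l r) = leaves l + leaves r"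

fun graft :: "free2 \<Rightarrow> nat \<Rightarrow> free2 \<Rightarrow> free2" where
  "graft Leaf i t = t"
| "graft (Node g l r) i t =
     (if i \<le> leaves l then Node g (graft l i t) r
      else Node g l (graft r (i - leaves l) t))"

end

theory Submission
  imports Defs
begin

text \<open>A binary tree with n leaves is sent to a red-free BNC of size n whose blue arcs
  are the base together with, for each internal node spanning vertices a < b < c (b being
  where its left subtree ends), the arc (a, b) and, for the label of T_bbb, also (b, c).
  Since the base of such a configuration is blue, composing two of them creates no red
  arc, and the glued edge, through the relabelling of vertices, becomes the new arc
  (i, i + m) exactly when it was blue; so grafting corresponds to composition. The map
  sends the corollas to the two generators, hence its image is the generated suboperad.
  It is injective because a tree can be read back from its arcs: the longest arc leaving
  the leftmost vertex of a node ends where the left subtree ends.\<close>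

lemma leaves_ge_1: "1 \<le> leaves t"
  by (induction t) auto

lemma leaves_graft: "leaves (graft s i t) = leaves s + leaves t - 1"
  using leaves_ge_1[of t] by (induction s arbitrary: i) auto

text \<open>The non-base blue arcs of the image of a tree, with its leftmost vertex numbered a.\<close>
fun tree_arcs :: "free2 \<Rightarrow> nat \<Rightarrow> (nat \<times> nat) set" where
  "tree_arcs Leaf a = {}"
| "tree_arcs (Node g l r) a = tree_arcs l a \<union> tree_arcs r (a + leaves l) \<union> {(a, a + leaves l)}
     \<union> (if g then {(a + leaves l, a + leaves l + leaves r)} else {})"

definition bnc_of_tree :: "free2 \<Rightarrow> bnc" where
  "bnc_of_tree t = (leaves t, insert (1, 1 + leaves t) (tree_arcs t 1), {})"

lemma tree_arcs_bounds:
  "p \<in> tree_arcs t a \<Longrightarrow>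
     a \<le> fst p \<and> fst p < snd p \<and> snd p \<le> a + leaves t \<and> snd p < fst p + leaves t"
proof (induction t arbitrary: a)
  case (Node g l r)
  then show ?case
    using leaves_ge_1[of l] leaves_ge_1[of r] by (auto split: if_splits dest!: Node.IH)
qed simp

definition shift_arc :: "nat \<Rightarrow> nat \<times> nat \<Rightarrow> nat \<times> nat" where
  "shift_arc d p = (fst p + d, snd p + d)"

lemma tree_arcs_shift: "tree_arcs t (a + d) = shift_arc d ` tree_arcs t a"
proof (induction t arbitrary: a)
  case (Node g l r)
  show ?case
    using Node.IH(1)[of a] Node.IH(2)[of "a + leaves l"]
    by (simp add: image_Un shift_arc_def add_ac)
qed simp

definition glue_vertex :: "nat \<Rightarrow> nat \<Rightarrow> nat \<Rightarrow> nat" where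
  "glue_vertex i m v = (if v \<le> i then v else v + m - 1)"

definition glue_arc :: "nat \<Rightarrow> nat \<Rightarrow> nat \<times> nat \<Rightarrow> nat \<times> nat" where
  "glue_arc i m p = (glue_vertex i m (fst p), glue_vertex i m (snd p))"

lemma glue_arc_tree_arcs_left:
  assumes "a + leaves t \<le> c"
  shows "glue_arc c m ` tree_arcs t a = tree_arcs t a"
proof -
  have "glue_arc c m p = p" if "p \<in> tree_arcs t a" for p
    using tree_arcs_bounds[OF that] assms by (simp add: glue_arc_def glue_vertex_def)
  then show ?thesis by simp
qed

lemma glue_arc_tree_arcs_right:
  assumes "c < a" "1 \<le> m"
  shows "glue_arc c m ` tree_arcs t a = tree_arcs t (a + (m - 1))"
proof -
  have "glue_arc c m p = shift_arc (m - 1) p" if "p \<in> tree_arcs t a" for p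
    using tree_arcs_bounds[OF that] assms
    by (simp add: glue_arc_def glue_vertex_def shift_arc_def)
  then show ?thesis by (simp add: tree_arcs_shift)
qed

lemma tree_arcs_graft:
  assumes "1 \<le> i" "i \<le> leaves s"
  shows "tree_arcs (graft s i t) a =
    glue_arc (a + i - 1) (leaves t) ` tree_arcs s a \<union> tree_arcs t (a + i - 1)"
  using assms
proof (induction s arbitrary: i a)
  case (Node g l r)
  define c where "c = a + i - 1"
  define m where "m = leaves t"
  let ?L = "leaves l" and ?R = "leaves r"
  have "1 \<le> m" unfolding m_def by (rule leaves_ge_1)
  show ?case
  proof (cases "i \<le> ?L")
    case True
    let ?L' = "?L + (m - 1)"
    have IH: "tree_arcs (graft l i t) a = glue_arc c m ` tree_arcs l a \<union> tree_arcs t c"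
      using Node.IH(1) Node.prems True by (simp add: c_def m_def)
    have right: "glue_arc c m ` tree_arcs r (a + ?L) = tree_arcs r (a + ?L')"
      using glue_arc_tree_arcs_right[of c "a + ?L" m r] True Node.prems \<open>1 \<le> m\<close>
      by (simp add: c_def add_ac)
    have arcs: "glue_arc c m (a, a + ?L) = (a, a + ?L')"
      "glue_arc c m (a + ?L, a + ?L + ?R) = (a + ?L', a + ?L' + ?R)"
      using True Node.prems \<open>1 \<le> m\<close> by (auto simp: glue_arc_def glue_vertex_def c_def)
    have "tree_arcs (graft (Node g l r) i t) a = tree_arcs (graft l i t) a \<union> tree_arcs r (a + ?L')
        \<union> {(a, a + ?L')} \<union> (if g then {(a + ?L', a + ?L' + ?R)} else {})"
      using True \<open>1 \<le> m\<close> by (simp add: leaves_graft m_def)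
    also have "\<dots> = glue_arc c m ` tree_arcs (Node g l r) a \<union> tree_arcs t c"
      unfolding IH by (simp add: image_Un right arcs) blast
    finally show ?thesis by (simp add: c_def m_def)
  next
    case False
    let ?R' = "?R + (m - 1)"
    have IH: "tree_arcs (graft r (i - ?L) t) (a + ?L)
        = glue_arc c m ` tree_arcs r (a + ?L) \<union> tree_arcs t c"
      using Node.IH(2)[of "i - ?L" "a + ?L"] Node.prems False by (simp add: c_def m_def)
    have left: "glue_arc c m ` tree_arcs l a = tree_arcs l a"
      using False by (intro glue_arc_tree_arcs_left) (simp add: c_def)
    have arcs: "glue_arc c m (a, a + ?L) = (a, a + ?L)"
      "glue_arc c m (a + ?L, a + ?L + ?R) = (a + ?L, a + ?L + ?R')"
      using False Node.prems \<open>1 \<le> m\<close> by (auto simp: glue_arc_def glue_vertex_def c_def)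
    have "tree_arcs (graft (Node g l r) i t) a = tree_arcs l a \<union> tree_arcs (graft r (i - ?L) t) (a + ?L)
        \<union> {(a, a + ?L)} \<union> (if g then {(a + ?L, a + ?L + ?R')} else {})"
      using False \<open>1 \<le> m\<close> by (simp add: leaves_graft m_def)
    also have "\<dots> = glue_arc c m ` tree_arcs (Node g l r) a \<union> tree_arcs t c"
      unfolding IH by (simp add: image_Un left arcs) blast
    finally show ?thesis by (simp add: c_def m_def)
  qed
qed simp

lemma bnc_comp_blue_base:
  assumes "1 \<le> i" "(1, m + 1) \<in> B'"
  shows "bnc_comp (n, B, {}) i (m, B', {}) =
    (n + m - 1, glue_arc i m ` B \<union> shift_arc (i - 1) ` (B' - {(1, m + 1)}), {})"
proof -
  have edge: "glue_arc i m (i, i + 1) = (i, i + m)"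
    by (simp add: glue_arc_def glue_vertex_def)
  then have "glue_arc i m ` B = insert (i, i + m) (glue_arc i m ` (B - {(i, i + 1)}))"
    if "(i, i + 1) \<in> B"
    using that by (metis image_insert insert_Diff)
  moreover have "(\<lambda>(a, b). (glue_vertex i m a, glue_vertex i m b)) = glue_arc i m"
    by (auto simp: glue_arc_def)
  moreover have "(\<lambda>(a::nat, b::nat). (a + i - 1, b + i - 1)) = shift_arc (i - 1)"
    using assms(1) by (auto simp: shift_arc_def)
  ultimately show ?thesis
    using assms(2)
    by (simp add: bnc_comp_def Let_def bnc_size_def bnc_blue_def bnc_red_def
        flip: glue_vertex_def)
qed

lemma bnc_of_tree_graft:
  assumes "1 \<le> i" "i \<le> leaves s"
  shows "bnc_of_tree (graft s i t) = bnc_comp (bnc_of_tree s) i (bnc_of_tree t)"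
proof -
  have "(1, leaves t + 1) \<notin> tree_arcs t 1"
    using tree_arcs_bounds[of "(1, leaves t + 1)" t 1] by auto
  then have "insert (1, 1 + leaves t) (tree_arcs t 1) - {(1, leaves t + 1)} = tree_arcs t 1"
    by (auto simp: add.commute)
  moreover have "shift_arc (i - 1) ` tree_arcs t 1 = tree_arcs t i"
    using tree_arcs_shift[of t 1 "i - 1"] assms(1) by simp
  moreover have "glue_arc i (leaves t) (1, 1 + leaves s) = (1, 1 + (leaves s + leaves t - 1))"
    using assms leaves_ge_1[of t] by (simp add: glue_arc_def glue_vertex_def)
  ultimately show ?thesis
    using assms tree_arcs_graft[OF assms, of t 1]
    by (simp add: bnc_of_tree_def bnc_comp_blue_base leaves_graft)
qed

lemma tree_arcs_Node_first_arc:
  assumes "(a, b) \<in> tree_arcs (Node g l r) a"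
  shows "b \<le> a + leaves l"
  using assms tree_arcs_bounds[of "(a, b)" l a] tree_arcs_bounds[of "(a, b)" r "a + leaves l"]
    leaves_ge_1[of l]
  by (auto split: if_splits)

lemma tree_arcs_Node_left:
  "tree_arcs l a =
     {p \<in> tree_arcs (Node g l r) a. snd p \<le> a + leaves l \<and> p \<noteq> (a, a + leaves l)}"
  using tree_arcs_bounds[of _ l a] tree_arcs_bounds[of _ r "a + leaves l"]
    leaves_ge_1[of l] leaves_ge_1[of r]
  by (auto split: if_splits) fastforce+

lemma tree_arcs_Node_right:
  "tree_arcs r (a + leaves l) =
     {p \<in> tree_arcs (Node g l r) a. a + leaves l \<le> fst p \<and>
        p \<noteq> (a + leaves l, a + leaves l + leaves r)}"
  using tree_arcs_bounds[of _ l a] tree_arcs_bounds[of _ r "a + leaves l"]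
    leaves_ge_1[of l] leaves_ge_1[of r]
  by (auto split: if_splits) fastforce+

lemma tree_arcs_Node_label:
  "g \<longleftrightarrow> (a + leaves l, a + leaves l + leaves r) \<in> tree_arcs (Node g l r) a"
  using tree_arcs_bounds[of "(a + leaves l, a + leaves l + leaves r)" l a]
    tree_arcs_bounds[of "(a + leaves l, a + leaves l + leaves r)" r "a + leaves l"]
    leaves_ge_1[of l] leaves_ge_1[of r]
  by auto

lemma tree_arcs_inj:
  "leaves s = leaves t \<Longrightarrow> tree_arcs s a = tree_arcs t a \<Longrightarrow> s = t"
proof (induction s arbitrary: t a)
  case Leaf
  then show ?case
    by (cases t) (auto simp: add_is_1 leaves_ge_1 Suc_le_eq)
next
  case (Node g l r)
  then obtain g' l' r' where t: "t = Node g' l' r'"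
    by (cases t) (auto simp: add_is_1 leaves_ge_1 Suc_le_eq)
  let ?A = "tree_arcs (Node g l r) a"
  have A: "?A = tree_arcs (Node g' l' r') a"
    using Node.prems t by simp
  have "(a, a + leaves l) \<in> tree_arcs (Node g' l' r') a"
    unfolding A[symmetric] by simp
  moreover have "(a, a + leaves l') \<in> ?A"
    unfolding A by simp
  ultimately have L: "leaves l = leaves l'"
    using tree_arcs_Node_first_arc by (meson add_le_cancel_left antisym)
  have R: "leaves r = leaves r'"
    using L Node.prems t by simp
  have "g = g'"
    using tree_arcs_Node_label[of g a l r] tree_arcs_Node_label[of g' a l' r']
    unfolding A L R by blast
  moreover have "l = l'"
    using tree_arcs_Node_left[of l a g r] tree_arcs_Node_left[of l' a g' r']
    unfolding A L by (intro Node.IH(1)[of l' a, OF L]) (simp only:)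
  moreover have "r = r'"
    using tree_arcs_Node_right[of r a l g] tree_arcs_Node_right[of r' a l' g']
    unfolding A L R by (intro Node.IH(2)[of r' "a + leaves l'", OF R]) (simp only:)
  ultimately show ?case
    using t by simp
qed

lemma inj_bnc_of_tree: "inj bnc_of_tree"
proof (rule injI)
  fix s t
  assume eq: "bnc_of_tree s = bnc_of_tree t"
  then have L: "leaves s = leaves t"
    by (simp add: bnc_of_tree_def)
  have "(1, 1 + leaves s) \<notin> tree_arcs s 1" "(1, 1 + leaves s) \<notin> tree_arcs t 1"
    using tree_arcs_bounds[of "(1, 1 + leaves s)" s 1] tree_arcs_bounds[of "(1, 1 + leaves s)" t 1] L
    by auto
  with eq L have "tree_arcs s 1 = tree_arcs t 1"
    by (simp add: bnc_of_tree_def) (metis insert_ident)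
  with L show "s = t"
    by (rule tree_arcs_inj)
qed

lemma bnc_size_bnc_of_tree [simp]: "bnc_size (bnc_of_tree t) = leaves t"
  by (simp add: bnc_of_tree_def bnc_size_def)

lemma bnc_of_tree_Leaf: "bnc_of_tree Leaf = bnc_unit"
  by (simp add: bnc_of_tree_def bnc_unit_def)

lemma bnc_of_tree_corolla: "bnc_of_tree (Node g Leaf Leaf) = (if g then T_bbb else T_bbu)"
  by (auto simp: bnc_of_tree_def T_bbb_def T_bbu_def)

lemma bnc_of_tree_in_gen_subop: "bnc_of_tree t \<in> gen_subop {T_bbb, T_bbu}"
proof (induction t)
  case Leaf
  show ?case
    unfolding bnc_of_tree_Leaf by (rule gen_subop.gen_unit)
next
  case (Node g l r)
  let ?G = "gen_subop {T_bbb, T_bbu}" and ?c = "Node g Leaf Leaf"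
  have "bnc_of_tree ?c \<in> ?G"
    unfolding bnc_of_tree_corolla by (simp add: gen_subop.gen_gen)
  then have "bnc_of_tree (graft ?c 2 r) \<in> ?G"
    using Node.IH(2) by (subst bnc_of_tree_graft) (auto intro: gen_subop.gen_comp)
  then have "bnc_of_tree (graft (graft ?c 2 r) 1 l) \<in> ?G"
    using Node.IH(1) by (subst bnc_of_tree_graft) (auto intro: gen_subop.gen_comp simp: leaves_ge_1)
  then show ?case by simp
qed

lemma gen_subop_subset_range_bnc_of_tree: "gen_subop {T_bbb, T_bbu} \<subseteq> range bnc_of_tree"
proof
  fix C
  assume "C \<in> gen_subop {T_bbb, T_bbu}"
  then show "C \<in> range bnc_of_tree"
  proof (induction rule: gen_subop.induct)
    case gen_unit
    show ?case
      by (metis bnc_of_tree_Leaf rangeI)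
  next
    case (gen_gen g)
    then show ?case
      by (metis bnc_of_tree_corolla empty_iff insert_iff rangeI)
  next
    case (gen_comp C D i)
    then obtain s t where "C = bnc_of_tree s" "D = bnc_of_tree t"
      by blast
    with gen_comp.hyps show ?case
      by (metis bnc_of_tree_graft bnc_size_bnc_of_tree rangeI)
  qed
qed

theorem theorem3p3:
  shows "\<exists>\<phi> :: free2 \<Rightarrow> bnc.
           bij_betw \<phi> UNIV (gen_subop {T_bbb, T_bbu}) \<and>
           \<phi> Leaf = bnc_unit \<and>
           (\<forall>t. bnc_size (\<phi> t) = leaves t) \<and>
           (\<forall>s i t. 1 \<le> i \<and> i \<le> leaves s \<longrightarrow>
              \<phi> (graft s i t) = bnc_comp (\<phi> s) i (\<phi> t))"
proof (intro exI conjI allI impI)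
  show "bij_betw bnc_of_tree UNIV (gen_subop {T_bbb, T_bbu})"
    unfolding bij_betw_def
    using inj_bnc_of_tree bnc_of_tree_in_gen_subop gen_subop_subset_range_bnc_of_tree by blast
  show "bnc_of_tree Leaf = bnc_unit"
    by (rule bnc_of_tree_Leaf)
  show "bnc_size (bnc_of_tree t) = leaves t" for t
    by (rule bnc_size_bnc_of_tree)
  show "bnc_of_tree (graft s i t) = bnc_comp (bnc_of_tree s) i (bnc_of_tree t)"
    if "1 \<le> i \<and> i \<le> leaves s" for s i t
    using that by (simp add: bnc_of_tree_graft)
qed

end
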